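(* A graphic sequence $d$ is forcibly bipartite unicyclic if and only if $d=(2,2,2,2)$.
   Context: A sequence of positive integers $d=(d_1,\ldots,d_n)$ is graphic if some simple graph on $\{1,\ldots,n\}$ has vertex $i$ of degree $d_i$ (a realization). A graph is bipartite unicyclic if it is connected, bipartite, and contains exactly one cycle. A sequence is forcibly bipartite unicyclic if every realization of it is bipartite unicyclic. *)

theory Defs
  imports Main
begin

text \<open>Graphs on the vertex set {0..<n} (vertex i of the paper is i-1 here),
  given by an edge set of 2-element subsets.\<close>

definition simple_graph :: "nat \<Rightarrow> nat set set \<Rightarrow> bool" where
  "simple_graph n E \<longleftrightarrow> E \<subseteq> {{u, v} | u v. u < n \<and> v < n \<and> u \<noteq> v}"

definition degree :: "nat set set \<Rightarrow> nat \<Rightarrow> nat" where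
  "degree E v = card {e \<in> E. v \<in> e}"

definition realization :: "nat list \<Rightarrow> nat set set \<Rightarrow> bool" where
  "realization d E \<longleftrightarrow> simple_graph (length d) E \<and>
     (\<forall>i < length d. degree E i = d ! i)"

definition graphic :: "nat list \<Rightarrow> bool" where
  "graphic d \<longleftrightarrow> (\<exists>E. realization d E)"

definition connected_graph :: "nat \<Rightarrow> nat set set \<Rightarrow> bool" where
  "connected_graph n E \<longleftrightarrow>
     (\<forall>u < n. \<forall>v < n. (u, v) \<in> {(x, y). {x, y} \<in> E}\<^sup>*)"

definition bipartite_graph :: "nat \<Rightarrow> nat set set \<Rightarrow> bool" where
  "bipartite_graph n E \<longleftrightarrow> (\<exists>part :: nat \<Rightarrow> bool. \<forall>u v. {u, v} \<in> E \<longrightarrow> part u \<noteq> part v)"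

definition is_cycle :: "nat set set \<Rightarrow> nat set set \<Rightarrow> bool" where
  "is_cycle E C \<longleftrightarrow> C \<subseteq> E \<and>
     (\<exists>vs. length vs \<ge> 3 \<and> distinct vs \<and>
        C = {{vs ! i, vs ! ((i + 1) mod length vs)} | i. i < length vs})"

definition bipartite_unicyclic :: "nat \<Rightarrow> nat set set \<Rightarrow> bool" where
  "bipartite_unicyclic n E \<longleftrightarrow> connected_graph n E \<and> bipartite_graph n E \<and>
     (\<exists>!C. is_cycle E C)"

definition forcibly_bipartite_unicyclic :: "nat list \<Rightarrow> bool" where
  "forcibly_bipartite_unicyclic d \<longleftrightarrow>
     (\<forall>E. realization d E \<longrightarrow> bipartite_unicyclic (length d) E)"

end

theory Submission
  imports Defs
begin

text \<open>
  In a realization of a forcibly bipartite unicyclic sequence there is no path \<open>v\<^sub>0 v\<^sub>1 v\<^sub>2 v\<^sub>3 v\<^sub>4\<close>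
  on five vertices: \<open>v\<^sub>1, v\<^sub>3\<close> and \<open>v\<^sub>0, v\<^sub>4\<close> lie on the same side of the bipartition, so the
  2-switch replacing the edges \<open>v\<^sub>0v\<^sub>1, v\<^sub>3v\<^sub>4\<close> by \<open>v\<^sub>1v\<^sub>3, v\<^sub>0v\<^sub>4\<close> yields another realization,
  and that one contains the triangle \<open>v\<^sub>1v\<^sub>2v\<^sub>3\<close>. Hence the unique cycle is a square,
  connectivity forces it to span all vertices, and as a bipartite graph has no chords in a square,
  the realization is the square itself, so \<open>d = (2,2,2,2)\<close>. Conversely, the 2-regular graphs on
  four vertices are exactly the three labelled squares, which are bipartite unicyclic.
\<close>

lemma simple_graph_edgeD:
  assumes "simple_graph n E" "{u, v} \<in> E"
  shows "u < n" "v < n" "u \<noteq> v"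
proof -
  obtain a b where "{u, v} = {a, b}" "a < n" "b < n" "a \<noteq> b"
    using assms unfolding simple_graph_def by blast
  then show "u < n" "v < n" "u \<noteq> v" by (auto simp: doubleton_eq_iff)
qed

lemma simple_graph_finite:
  assumes "simple_graph n E"
  shows "finite E"
proof (rule finite_subset)
  show "E \<subseteq> (\<lambda>(u, v). {u, v}) ` ({..<n} \<times> {..<n})"
    using assms unfolding simple_graph_def by auto
qed simp

lemma rtrancl_leaves_set:
  assumes "(a, b) \<in> R\<^sup>*" "a \<in> S" "b \<notin> S"
  obtains x y where "(x, y) \<in> R" "x \<in> S" "y \<notin> S"
  using assms by (induction rule: rtrancl_induct) blast+

lemma degree_eq_length_filter:
  assumes "E \<subseteq> set ps" "distinct ps"
  shows "degree E v = length (filter (\<lambda>p. v \<in> p \<and> p \<in> E) ps)"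
proof -
  have "{f \<in> E. v \<in> f} = set (filter (\<lambda>p. v \<in> p \<and> p \<in> E) ps)"
    using assms(1) by auto
  then show ?thesis
    using assms(2) by (simp add: degree_def distinct_card[symmetric])
qed

lemma degree_two_switch:
  assumes "finite E" "distinct [a, b, c, e]"
    and "{a, b} \<in> E" "{c, e} \<in> E" "{a, c} \<notin> E" "{b, e} \<notin> E"
  shows "degree (E - {{a, b}, {c, e}} \<union> {{a, c}, {b, e}}) x = degree E x"
proof -
  let ?old = "{{a, b}, {c, e}} \<inter> {f. x \<in> f}" and ?new = "{{a, c}, {b, e}} \<inter> {f. x \<in> f}"
  have "{f \<in> E - {{a, b}, {c, e}} \<union> {{a, c}, {b, e}}. x \<in> f} = ({f \<in> E. x \<in> f} - ?old) \<union> ?new"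
    by auto
  moreover have "({f \<in> E. x \<in> f} - ?old) \<inter> ?new = {}" using assms(5,6) by auto
  moreover have "?old \<subseteq> {f \<in> E. x \<in> f}" using assms(3,4) by auto
  moreover have "card ?new = card ?old"
    using assms(2) by (cases "x \<in> {a, b, c, e}") (auto simp: Int_insert_left doubleton_eq_iff)
  ultimately show ?thesis
    using assms(1) card_mono[of "{f \<in> E. x \<in> f}" ?old]
    by (simp add: degree_def card_Un_disjoint card_Diff_subset)
qed

lemma realization_two_switch:
  assumes "realization d E" "distinct [a, b, c, e]"
    and "{a, b} \<in> E" "{c, e} \<in> E" "{a, c} \<notin> E" "{b, e} \<notin> E"
  shows "realization d (E - {{a, b}, {c, e}} \<union> {{a, c}, {b, e}})"
proof -
  have sg: "simple_graph (length d) E"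
    using assms(1) by (simp add: realization_def)
  have "a < length d" "b < length d" "c < length d" "e < length d"
    using simple_graph_edgeD[OF sg assms(3)] simple_graph_edgeD[OF sg assms(4)] by auto
  then have "simple_graph (length d) (E - {{a, b}, {c, e}} \<union> {{a, c}, {b, e}})"
    using sg assms(2) unfolding simple_graph_def by auto
  then show ?thesis
    using assms(1) degree_two_switch[OF simple_graph_finite[OF sg] assms(2-)]
    by (simp add: realization_def)
qed

lemma bipartite_graph_no_triangle:
  assumes "bipartite_graph n E" "{x, y} \<in> E" "{y, z} \<in> E"
  shows "{z, x} \<notin> E"
  using assms unfolding bipartite_graph_def by metis

definition cycle_edges :: "nat list \<Rightarrow> nat set set" where
  "cycle_edges vs = (\<lambda>i. {vs ! i, vs ! (Suc i mod length vs)}) ` {..<length vs}"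

lemma is_cycle_iff:
  "is_cycle E C \<longleftrightarrow> C \<subseteq> E \<and> (\<exists>vs. 3 \<le> length vs \<and> distinct vs \<and> C = cycle_edges vs)"
  unfolding is_cycle_def cycle_edges_def by auto

lemma finite_cycle_edges [simp]: "finite (cycle_edges vs)"
  by (simp add: cycle_edges_def)

lemma cycle_edges_3: "cycle_edges [a, b, c] = {{a, b}, {b, c}, {c, a}}"
  by (simp add: cycle_edges_def lessThan_Suc insert_commute)

lemma cycle_edges_4: "cycle_edges [a, b, c, e] = {{a, b}, {b, c}, {c, e}, {e, a}}"
  by (simp add: cycle_edges_def lessThan_Suc insert_commute)

lemma cycle_edges_Suc_nth:
  assumes "Suc i < length vs"
  shows "{vs ! i, vs ! Suc i} \<in> cycle_edges vs"
  using assms unfolding cycle_edges_def by (intro image_eqI[of _ _ i]) auto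

lemma set_subset_Union_cycle_edges: "set vs \<subseteq> \<Union>(cycle_edges vs)"
  unfolding cycle_edges_def by (auto simp: in_set_conv_nth)

lemma bipartite_graph_cycle_length_ne_3:
  assumes "bipartite_graph n E" "cycle_edges vs \<subseteq> E"
  shows "length vs \<noteq> 3"
proof
  assume "length vs = 3"
  then obtain x y z where "vs = [x, y, z]"
    by (auto simp: numeral_eq_Suc length_Suc_conv)
  then have "{x, y} \<in> E" "{y, z} \<in> E" "{z, x} \<in> E"
    using assms(2) by (auto simp: cycle_edges_3)
  then show False
    using bipartite_graph_no_triangle[OF assms(1)] by metis
qed

lemma connected_graph_cycle_edges:
  assumes "{..<n} \<subseteq> set vs"
  shows "connected_graph n (cycle_edges vs)"
proof -
  let ?R = "{(x, y). {x, y} \<in> cycle_edges vs}"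
  have "(vs ! 0, vs ! i) \<in> ?R\<^sup>*" if "i < length vs" for i
    using that by (induction i) (auto intro: rtrancl_into_rtrancl cycle_edges_Suc_nth)
  then have to_hd: "(vs ! 0, x) \<in> ?R\<^sup>*" if "x \<in> set vs" for x
    using that by (auto simp: in_set_conv_nth)
  have "sym (?R\<^sup>*)"
    by (rule sym_rtrancl) (auto intro: symI simp: insert_commute)
  then have "(x, y) \<in> ?R\<^sup>*" if "x \<in> set vs" "y \<in> set vs" for x y
    using to_hd[OF that(1)] to_hd[OF that(2)] by (meson rtrancl_trans symD)
  then show ?thesis
    using assms unfolding connected_graph_def by blast
qed

lemma degree_square:
  assumes "distinct [a, b, c, e]" "x \<in> {a, b, c, e}"
  shows "degree (cycle_edges [a, b, c, e]) x = 2"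
proof -
  let ?ps = "[{a, b}, {b, c}, {c, e}, {e, a}]"
  have "distinct ?ps"
    using assms(1) by (auto simp: doubleton_eq_iff)
  then have "degree (cycle_edges [a, b, c, e]) x = length (filter (\<lambda>p. x \<in> p) ?ps)"
    by (subst degree_eq_length_filter[of _ ?ps]) (simp_all add: cycle_edges_4)
  also have "\<dots> = 2"
    using assms by auto
  finally show ?thesis .
qed

lemma bipartite_graph_square:
  assumes "distinct [a, b, c, e]"
  shows "bipartite_graph n (cycle_edges [a, b, c, e])"
  unfolding bipartite_graph_def cycle_edges_4
proof (intro exI allI impI)
  fix u v assume "{u, v} \<in> {{a, b}, {b, c}, {c, e}, {e, a}}"
  then show "(u = a \<or> u = c) \<noteq> (v = a \<or> v = c)"
    using assms by (auto simp: doubleton_eq_iff)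
qed

lemma is_cycle_square_iff:
  assumes "distinct [a, b, c, e]"
  shows "is_cycle (cycle_edges [a, b, c, e]) C \<longleftrightarrow> C = cycle_edges [a, b, c, e]"
proof
  assume "C = cycle_edges [a, b, c, e]"
  then show "is_cycle (cycle_edges [a, b, c, e]) C"
    using assms unfolding is_cycle_iff by (intro conjI exI[of _ "[a, b, c, e]"]) simp_all
next
  let ?E = "cycle_edges [a, b, c, e]"
  assume "is_cycle ?E C"
  then obtain vs where C: "C = cycle_edges vs" "C \<subseteq> ?E"
    and vs: "3 \<le> length vs" "distinct vs"
    unfolding is_cycle_iff by blast
  have "set vs \<subseteq> {a, b, c, e}"
    using set_subset_Union_cycle_edges[of vs] C by (auto simp: cycle_edges_4)
  then have "length vs \<le> 4"
    using vs(2) assms card_mono[of "{a, b, c, e}" "set vs"] by (simp add: distinct_card)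
  moreover have "length vs \<noteq> 3"
    using bipartite_graph_cycle_length_ne_3[OF bipartite_graph_square[OF assms]] C by simp
  ultimately obtain w x y z where "vs = [w, x, y, z]"
    using vs(1) by (auto simp: numeral_eq_Suc length_Suc_conv le_Suc_eq)
  then have "card C = 4"
    using C(1) vs(2) by (auto simp: cycle_edges_4 doubleton_eq_iff)
  moreover have "card ?E = 4"
    using assms by (auto simp: cycle_edges_4 doubleton_eq_iff)
  ultimately show "C = ?E"
    using card_subset_eq[OF finite_cycle_edges C(2)] by simp
qed

lemma bipartite_unicyclic_square:
  assumes "distinct [a, b, c, e]" "{..<n} \<subseteq> {a, b, c, e}"
  shows "bipartite_unicyclic n (cycle_edges [a, b, c, e])"
  unfolding bipartite_unicyclic_def
  using connected_graph_cycle_edges[of n "[a, b, c, e]"] bipartite_graph_square is_cycle_square_iff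
    assms by auto

lemma bipartite_graph_eq_spanning_square:
  assumes sg: "simple_graph n E" and bip: "bipartite_graph n E"
    and C: "cycle_edges [v0, v1, v2, v3] \<subseteq> E" and span: "{..<n} \<subseteq> {v0, v1, v2, v3}"
  shows "E = cycle_edges [v0, v1, v2, v3]"
proof
  have "{v2, v0} \<notin> E" "{v3, v1} \<notin> E"
    using C bipartite_graph_no_triangle[OF bip] by (auto simp: cycle_edges_4)
  then have chords: "{v0, v2} \<notin> E" "{v2, v0} \<notin> E" "{v1, v3} \<notin> E" "{v3, v1} \<notin> E"
    by (simp_all add: insert_commute)
  show "E \<subseteq> cycle_edges [v0, v1, v2, v3]"
  proof
    fix f assume "f \<in> E"
    then obtain u v where f: "f = {u, v}" "u < n" "v < n" "u \<noteq> v"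
      using sg unfolding simple_graph_def by blast
    then have "u \<in> {v0, v1, v2, v3}" "v \<in> {v0, v1, v2, v3}"
      using span by auto
    then show "f \<in> cycle_edges [v0, v1, v2, v3]"
      using chords \<open>f \<in> E\<close> f(4) unfolding f(1) cycle_edges_4
      by (elim insertE emptyE) (simp_all add: doubleton_eq_iff)
  qed
qed (rule C)

lemma two_regular_graphs_on_four_vertices:
  assumes "simple_graph 4 E" "\<And>v. v < 4 \<Longrightarrow> degree E v = 2"
  shows "E = cycle_edges [0, 1, 2, 3] \<or> E = cycle_edges [0, 1, 3, 2] \<or> E = cycle_edges [0, 2, 1, 3]"
proof -
  let ?ps = "[{0, 1}, {0, 2}, {0, 3}, {1, 2}, {1, 3}, {2, 3}] :: nat set list"
  have dist: "distinct ?ps" by (simp add: doubleton_eq_iff)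
  have sub: "E \<subseteq> set ?ps"
  proof
    fix f assume "f \<in> E"
    then obtain u v where "f = {u, v}" "u < 4" "v < 4" "u \<noteq> v"
      using assms(1) unfolding simple_graph_def by blast
    then show "f \<in> set ?ps" by (auto simp: eval_nat_numeral less_Suc_eq doubleton_eq_iff)
  qed
  have "length (filter (\<lambda>p. v \<in> p \<and> p \<in> E) ?ps) = 2" if "v < 4" for v
    using assms(2)[OF that] degree_eq_length_filter[OF sub dist] by simp
  from this[of 0] this[of 1] this[of 2] this[of 3]
  have "filter (\<lambda>p. p \<in> E) ?ps \<in>
    {[{0, 1}, {0, 3}, {1, 2}, {2, 3}], [{0, 1}, {0, 2}, {1, 3}, {2, 3}], [{0, 2}, {0, 3}, {1, 2}, {1, 3}]}"
    by (cases "{0, 1} \<in> E"; cases "{0, 2} \<in> E"; cases "{0, 3} \<in> E";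
        cases "{1, 2} \<in> E"; cases "{1, 3} \<in> E"; cases "{2, 3} \<in> E"; simp)
  moreover have "E = set (filter (\<lambda>p. p \<in> E) ?ps)"
    using sub unfolding set_filter by blast
  ultimately obtain xs where "E = set xs" and
    "xs \<in> {[{0, 1}, {0, 3}, {1, 2}, {2, 3}], [{0, 1}, {0, 2}, {1, 3}, {2, 3}], [{0, 2}, {0, 3}, {1, 2}, {1, 3}]}"
    by metis
  then show ?thesis
    unfolding cycle_edges_4 by (elim insertE emptyE) (simp_all add: insert_commute)
qed

lemma forcibly_bipartite_unicyclic_bipartite:
  assumes "forcibly_bipartite_unicyclic d" "realization d E"
  shows "bipartite_graph (length d) E"
  using assms by (simp add: forcibly_bipartite_unicyclic_def bipartite_unicyclic_def)

lemma forcibly_bipartite_unicyclic_connected: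
  assumes "forcibly_bipartite_unicyclic d" "realization d E"
  shows "connected_graph (length d) E"
  using assms by (simp add: forcibly_bipartite_unicyclic_def bipartite_unicyclic_def)

lemma forcibly_bipartite_unicyclic_no_path:
  assumes fbu: "forcibly_bipartite_unicyclic d" and R: "realization d E"
    and dist: "distinct [v0, v1, v2, v3, v4]"
    and E: "{v0, v1} \<in> E" "{v1, v2} \<in> E" "{v2, v3} \<in> E" "{v3, v4} \<in> E"
  shows False
proof -
  obtain part :: "nat \<Rightarrow> bool" where part: "\<And>u v. {u, v} \<in> E \<Longrightarrow> part u \<noteq> part v"
    using forcibly_bipartite_unicyclic_bipartite[OF fbu R] unfolding bipartite_graph_def by blast
  have "part v1 = part v3" "part v0 = part v4"
    using part[OF E(1)] part[OF E(2)] part[OF E(3)] part[OF E(4)] by auto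
  then have absent: "{v1, v3} \<notin> E" "{v0, v4} \<notin> E"
    using part by auto
  let ?E' = "E - {{v1, v0}, {v3, v4}} \<union> {{v1, v3}, {v0, v4}}"
  have "distinct [v1, v0, v3, v4]" "{v1, v0} \<in> E"
    using dist E(1) by (auto simp: insert_commute)
  then have "realization d ?E'"
    using realization_two_switch[OF R _ _ E(4) absent] by blast
  moreover have "{v1, v2} \<in> ?E'" "{v2, v3} \<in> ?E'" "{v3, v1} \<in> ?E'"
    using dist E(2,3) by (auto simp: doubleton_eq_iff)
  ultimately show False
    using bipartite_graph_no_triangle forcibly_bipartite_unicyclic_bipartite[OF fbu] by metis
qed

lemma forcibly_bipartite_unicyclic_cycle_length:
  assumes fbu: "forcibly_bipartite_unicyclic d" and R: "realization d E"
    and C: "cycle_edges vs \<subseteq> E" and vs: "3 \<le> length vs" "distinct vs"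
  shows "length vs = 4"
proof -
  have "length vs \<noteq> 3"
    using bipartite_graph_cycle_length_ne_3[OF forcibly_bipartite_unicyclic_bipartite[OF fbu R] C] .
  moreover have "\<not> 5 \<le> length vs"
  proof
    assume "5 \<le> length vs"
    then obtain v0 v1 v2 v3 v4 rest where vs_eq: "vs = v0 # v1 # v2 # v3 # v4 # rest"
      by (auto simp: numeral_eq_Suc Suc_le_length_iff)
    have "{vs ! i, vs ! Suc i} \<in> E" if "i < 4" for i
      using C cycle_edges_Suc_nth[of i vs] that vs_eq by auto
    from this[of 0] this[of 1] this[of 2] this[of 3] show False
      using forcibly_bipartite_unicyclic_no_path[OF fbu R, of v0 v1 v2 v3 v4] vs(2) vs_eq by simp
  qed
  ultimately show ?thesis
    using vs(1) by linarith
qed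

lemma forcibly_bipartite_unicyclic_square_spanning:
  assumes fbu: "forcibly_bipartite_unicyclic d" and R: "realization d E"
    and C: "cycle_edges [v0, v1, v2, v3] \<subseteq> E" and dist: "distinct [v0, v1, v2, v3]"
  shows "{..<length d} \<subseteq> {v0, v1, v2, v3}"
proof
  fix u assume u: "u \<in> {..<length d}"
  show "u \<in> {v0, v1, v2, v3}"
  proof (rule ccontr)
    assume "u \<notin> {v0, v1, v2, v3}"
    moreover have "v0 < length d"
      using R C simple_graph_edgeD(1)[of "length d" E v0 v1] by (simp add: realization_def cycle_edges_4)
    then have "(v0, u) \<in> {(x, y). {x, y} \<in> E}\<^sup>*"
      using forcibly_bipartite_unicyclic_connected[OF fbu R] u unfolding connected_graph_def by blast
    ultimately obtain x w where xw: "{x, w} \<in> E" "x \<in> {v0, v1, v2, v3}" "w \<notin> {v0, v1, v2, v3}"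
      using rtrancl_leaves_set[of v0 u _ "{v0, v1, v2, v3}"] by blast
    have path: False if "x = a" "{a, b} \<in> E" "{b, c} \<in> E" "{c, e} \<in> E" "distinct [w, a, b, c, e]"
      for a b c e
      using forcibly_bipartite_unicyclic_no_path[OF fbu R that(5) _ that(2-4)] xw(1) that(1)
      by (simp add: insert_commute)
    have "{v0, v1} \<in> E" "{v1, v2} \<in> E" "{v2, v3} \<in> E" "{v3, v0} \<in> E"
      using C by (simp_all add: cycle_edges_4)
    moreover have "distinct [w, v0, v1, v2, v3]"
      using dist xw(3) by simp
    ultimately show False
      using xw(2) path[of v0 v1 v2 v3] path[of v1 v2 v3 v0] path[of v2 v3 v0 v1] path[of v3 v0 v1 v2]
      by auto
  qed
qed

lemma forcibly_bipartite_unicyclic_imp_2222: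
  assumes fbu: "forcibly_bipartite_unicyclic d" and "graphic d"
  shows "d = [2, 2, 2, 2]"
proof -
  obtain E where R: "realization d E"
    using assms(2) unfolding graphic_def by blast
  have sg: "simple_graph (length d) E" and deg: "\<And>i. i < length d \<Longrightarrow> degree E i = d ! i"
    using R unfolding realization_def by auto
  have "bipartite_unicyclic (length d) E"
    using fbu R unfolding forcibly_bipartite_unicyclic_def by blast
  then obtain vs where C: "cycle_edges vs \<subseteq> E" and vs: "3 \<le> length vs" "distinct vs"
    unfolding bipartite_unicyclic_def is_cycle_iff by blast
  then have "length vs = 4"
    using forcibly_bipartite_unicyclic_cycle_length[OF fbu R] by blast
  then obtain v0 v1 v2 v3 where vs_eq: "vs = [v0, v1, v2, v3]"
    by (auto simp: numeral_eq_Suc length_Suc_conv)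
  have "{v0, v1, v2, v3} \<subseteq> {..<length d}"
    using C simple_graph_edgeD(1)[OF sg] by (auto simp: vs_eq cycle_edges_4)
  moreover have "{..<length d} \<subseteq> {v0, v1, v2, v3}"
    using forcibly_bipartite_unicyclic_square_spanning[OF fbu R] C vs(2) by (simp add: vs_eq)
  ultimately have span: "{..<length d} = {v0, v1, v2, v3}" by blast
  then have "length d = 4"
    using vs(2) card_lessThan[of "length d"] by (simp add: vs_eq)
  have E: "E = cycle_edges [v0, v1, v2, v3]"
    using bipartite_graph_eq_spanning_square[OF sg forcibly_bipartite_unicyclic_bipartite[OF fbu R]]
      C span by (simp add: vs_eq)
  have "d ! i = 2" if "i < length d" for i
  proof -
    have "i \<in> {v0, v1, v2, v3}"
      using span that by blast
    then show ?thesis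
      using deg[OF that] degree_square[of v0 v1 v2 v3 i] vs(2) by (simp add: E vs_eq)
  qed
  then have "d = replicate 4 2"
    using \<open>length d = 4\<close> by (intro replicate_eqI) (auto simp: in_set_conv_nth)
  then show ?thesis
    by (simp add: numeral_eq_Suc)
qed

lemma forcibly_bipartite_unicyclic_2222: "forcibly_bipartite_unicyclic [2, 2, 2, 2]"
  unfolding forcibly_bipartite_unicyclic_def
proof (intro allI impI)
  fix E assume R: "realization [2, 2, 2, 2] E"
  have len: "length [2, 2, 2, 2 :: nat] = 4" by simp
  have "[2, 2, 2, 2 :: nat] ! v = 2" if "v < 4" for v
    using that by (auto simp: less_Suc_eq numeral_eq_Suc)
  then have "simple_graph 4 E" "\<And>v. v < 4 \<Longrightarrow> degree E v = 2"
    using R unfolding realization_def len by auto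
  then have "E = cycle_edges [0, 1, 2, 3] \<or> E = cycle_edges [0, 1, 3, 2] \<or> E = cycle_edges [0, 2, 1, 3]"
    by (rule two_regular_graphs_on_four_vertices)
  moreover have "{..<4} \<subseteq> {0, 1, 2, 3 :: nat}" by auto
  ultimately show "bipartite_unicyclic (length [2, 2, 2, 2]) E"
    unfolding len by (elim disjE) (auto intro!: bipartite_unicyclic_square)
qed

theorem corollary8p3:
  fixes d :: "nat list"
  assumes "\<forall>i < length d. d ! i > 0"
    and "graphic d"
  shows "forcibly_bipartite_unicyclic d \<longleftrightarrow> d = [2, 2, 2, 2]"
proof
  assume "forcibly_bipartite_unicyclic d"
  then show "d = [2, 2, 2, 2]"
    using assms(2) by (rule forcibly_bipartite_unicyclic_imp_2222)
next
  assume "d = [2, 2, 2, 2]"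
  then show "forcibly_bipartite_unicyclic d"
    using forcibly_bipartite_unicyclic_2222 by simp
qed

end
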